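(* Let $q\in\mathbb C$ with $|q|=1$, $q^2\neq1$, and let $A,B$ be self-adjoint operators on a Hilbert space $\mathcal H$. Fix $a,b\in\mathbb R$ with $ab\neq0$, and choose a square root $q^{1/2}$ of $q$, setting $\bar q^{1/2}:=\overline{q^{1/2}}$. Define the operator $T$ with domain $\mathcal D(T):=\mathcal D_q(A,B)$ by $$Tf=\bar q^{1/2}(A-aq^{1/2}I)(B-bq^{1/2}I)f+\tfrac{\bar q^{1/2}-q^{1/2}}{2}\,ab\,f .$$ If $T$ is essentially self-adjoint, then with $\lambda=a\bar q^{1/2}$ and $\mu=b\bar q^{1/2}$ (so that $\lambda,\lambda q\in\rho(A)$, $\mu,\mu q\in\rho(B)$) both identities $$R_\lambda(A)R_\mu(B)=qR_{\mu q}(B)R_{\lambda q}(A)+\mu\lambda q(q-1)R_{\mu q}(B)R_{\lambda q}(A)R_\lambda(A)R_\mu(B),$$ $$R_\lambda(A)R_\mu(B)=qR_{\mu q}(B)R_{\lambda q}(A)+\mu\lambda q(q-1)R_\lambda(A)R_\mu(B)R_{\mu q}(B)R_{\lambda q}(A)$$ hold on all of $\mathcal H$, and the bounded operator $R_{bq^{1/2}}(B)R_{aq^{1/2}}(A)$ is normal.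
   Context: $\rho(T)$ denotes the resolvent set and $R_\lambda(T)=(T-\lambda I)^{-1}$ the resolvent of a closed operator; products of unbounded operators have their natural domains; $\mathcal D_q(A,B):=\{f\in\mathcal D(BA)\cap\mathcal D(AB): ABf=qBAf\}$. (The operator $T$ is symmetric.) *)

theory Defs
  imports "HOL-Analysis.Analysis"
begin

text \<open>The distribution has no complex inner product spaces, so we introduce the class of
complex Hilbert spaces: a complete real normed space carrying a complex scalar multiplication
compatible with the real one, and a complex inner product (conjugate-linear in the first,
linear in the second argument) inducing the norm.\<close>

class chilbert_space = real_normed_vector + complete_space +
  fixes scaleC :: "complex \<Rightarrow> 'a \<Rightarrow> 'a" (infixr "*\<^sub>C" 75)
    and cinner :: "'a \<Rightarrow> 'a \<Rightarrow> complex"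
  assumes scaleC_add_right: "c *\<^sub>C (x + y) = c *\<^sub>C x + c *\<^sub>C y"
    and scaleC_add_left: "(c + d) *\<^sub>C x = c *\<^sub>C x + d *\<^sub>C x"
    and scaleC_scaleC: "c *\<^sub>C (d *\<^sub>C x) = (c * d) *\<^sub>C x"
    and scaleC_one: "1 *\<^sub>C x = x"
    and scaleR_scaleC: "scaleR r x = complex_of_real r *\<^sub>C x"
    and cinner_commute: "cinner x y = cnj (cinner y x)"
    and cinner_add_right: "cinner x (y + z) = cinner x y + cinner x z"
    and cinner_scaleC_right: "cinner x (c *\<^sub>C y) = c * cinner x y"
    and norm_eq_sqrt_cinner: "norm x = sqrt (Re (cinner x x))"

text \<open>An operator is a pair (domain, action); the action outside the domain is irrelevant.\<close>

type_synonym 'a lop = "'a set \<times> ('a \<Rightarrow> 'a)"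

definition dom :: "'a lop \<Rightarrow> 'a set" where "dom T = fst T"
definition app :: "'a lop \<Rightarrow> 'a \<Rightarrow> 'a" where "app T = snd T"

definition csubspace :: "'a::chilbert_space set \<Rightarrow> bool" where
  "csubspace D \<longleftrightarrow> 0 \<in> D \<and> (\<forall>x\<in>D. \<forall>y\<in>D. x + y \<in> D) \<and> (\<forall>c. \<forall>x\<in>D. c *\<^sub>C x \<in> D)"

definition linear_op :: "'a::chilbert_space lop \<Rightarrow> bool" where
  "linear_op T \<longleftrightarrow> csubspace (dom T) \<and>
     (\<forall>x\<in>dom T. \<forall>y\<in>dom T. app T (x + y) = app T x + app T y) \<and>
     (\<forall>c. \<forall>x\<in>dom T. app T (c *\<^sub>C x) = c *\<^sub>C app T x)"

definition densely_defined :: "'a::chilbert_space lop \<Rightarrow> bool" where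
  "densely_defined T \<longleftrightarrow> closure (dom T) = UNIV"

definition lop_eq :: "'a lop \<Rightarrow> 'a lop \<Rightarrow> bool" where
  "lop_eq S T \<longleftrightarrow> dom S = dom T \<and> (\<forall>x\<in>dom S. app S x = app T x)"

definition lop_comp :: "'a lop \<Rightarrow> 'a lop \<Rightarrow> 'a lop" where
  "lop_comp S T = ({x \<in> dom T. app T x \<in> dom S}, \<lambda>x. app S (app T x))"

definition lop_shift :: "'a::chilbert_space lop \<Rightarrow> complex \<Rightarrow> 'a lop" where
  "lop_shift T c = (dom T, \<lambda>x. app T x - c *\<^sub>C x)"

definition adjoint :: "'a::chilbert_space lop \<Rightarrow> 'a lop" where
  "adjoint T = ({y. \<exists>z. \<forall>x\<in>dom T. cinner (app T x) y = cinner x z},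
                \<lambda>y. SOME z. \<forall>x\<in>dom T. cinner (app T x) y = cinner x z)"

definition self_adjoint :: "'a::chilbert_space lop \<Rightarrow> bool" where
  "self_adjoint T \<longleftrightarrow> linear_op T \<and> densely_defined T \<and> lop_eq (adjoint T) T"

definition graph :: "'a lop \<Rightarrow> ('a \<times> 'a) set" where
  "graph T = {(x, app T x) | x. x \<in> dom T}"

definition ess_self_adjoint :: "'a::chilbert_space lop \<Rightarrow> bool" where
  "ess_self_adjoint T \<longleftrightarrow> linear_op T \<and> densely_defined T \<and>
     (\<exists>S. graph S = closure (graph T) \<and> self_adjoint S)"

definition resolvent_set :: "'a::chilbert_space lop \<Rightarrow> complex set" where
  "resolvent_set T = {l. (\<forall>y. \<exists>!x. x \<in> dom T \<and> app T x - l *\<^sub>C x = y) \<and>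
      (\<exists>C. \<forall>x\<in>dom T. norm x \<le> C * norm (app T x - l *\<^sub>C x))}"

definition resolvent :: "'a::chilbert_space lop \<Rightarrow> complex \<Rightarrow> 'a \<Rightarrow> 'a" where
  "resolvent T l = (\<lambda>y. THE x. x \<in> dom T \<and> app T x - l *\<^sub>C x = y)"

definition badjoint :: "('a::chilbert_space \<Rightarrow> 'a) \<Rightarrow> 'a \<Rightarrow> 'a" where
  "badjoint N = (\<lambda>y. THE z. \<forall>x. cinner (N x) y = cinner x z)"

definition normal_op :: "('a::chilbert_space \<Rightarrow> 'a) \<Rightarrow> bool" where
  "normal_op N \<longleftrightarrow> N \<circ> badjoint N = badjoint N \<circ> N"

definition Dq :: "'a::chilbert_space lop \<Rightarrow> 'a lop \<Rightarrow> complex \<Rightarrow> 'a set" where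
  "Dq A B q = {f. f \<in> dom (lop_comp B A) \<and> f \<in> dom (lop_comp A B) \<and>
                  app (lop_comp A B) f = q *\<^sub>C app (lop_comp B A) f}"

text \<open>Here r is the chosen square root q^{1/2} of q, and cnj r plays the role of
 conj(q)^{1/2}.\<close>
definition Top :: "'a::chilbert_space lop \<Rightarrow> 'a lop \<Rightarrow> complex \<Rightarrow> complex \<Rightarrow> real \<Rightarrow> real \<Rightarrow> 'a lop" where
  "Top A B q r a b = (Dq A B q, \<lambda>f.
      cnj r *\<^sub>C app (lop_comp (lop_shift A (of_real a * r)) (lop_shift B (of_real b * r))) f
      + ((cnj r - r) / 2 * of_real a * of_real b) *\<^sub>C f)"

end

theory Submission
  imports Defs
begin

text \<open>With \<open>r = q\<^sup>1\<^sup>/\<^sup>2\<close>, \<open>\<lambda> = a r\<^sup>*\<close> and \<open>\<mu> = b r\<^sup>*\<close>, the points \<open>\<lambda>, \<lambda>q = a r, \<mu>, \<mu>q = b r\<close> are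
  non-real because \<open>|r| = 1\<close> and \<open>r\<^sup>2 \<noteq> \<plusminus>1\<close>, so they lie in the resolvent sets of \<open>A\<close> and \<open>B\<close>.
  For \<open>f \<in> D\<^sub>q(A,B)\<close> the relation \<open>ABf = qBAf\<close> gives
  \<open>(A - \<lambda>q)(B - \<mu>q)f = q(B - \<mu>)(A - \<lambda>)f + \<mu>\<lambda>q(q - 1)f\<close>, and with the non-real constant
  \<open>\<kappa> = (r\<^sup>* - r)ab/2\<close> one gets \<open>T - \<kappa> = r\<^sup>*(A - \<lambda>q)(B - \<mu>q)\<close> and \<open>T + \<kappa> = r(B - \<mu>)(A - \<lambda>)\<close> on
  \<open>D\<^sub>q(A,B)\<close>. Applying the bounded operators \<open>R = R\<^sub>\<lambda>(A)R\<^sub>\<mu>(B)\<close> and \<open>R' = R\<^sub>\<mu>\<^sub>q(B)R\<^sub>\<lambda>\<^sub>q(A)\<close>, which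
  invert these products, yields the two resolvent identities on the ranges of \<open>T \<plusminus> \<kappa>\<close>. These ranges
  are dense because \<open>T\<close> is essentially self-adjoint, so the identities hold everywhere. Comparing
  them shows that \<open>R\<close> and \<open>R'\<close> commute; as \<open>R\<close> is the adjoint of \<open>R'\<close>, \<open>R'\<close> is normal.\<close>

section \<open>Complex inner product spaces\<close>

lemma scaleC_zero_left [simp]: "0 *\<^sub>C (x::'a::chilbert_space) = 0"
  using scaleR_scaleC[of 0 x] by simp

lemma scaleC_zero_right [simp]: "c *\<^sub>C (0::'a::chilbert_space) = 0"
  using scaleC_add_right[of c "0::'a" 0] by simp

lemma scaleC_minus_left: "(- c) *\<^sub>C (x::'a::chilbert_space) = - (c *\<^sub>C x)"
  using scaleC_add_left[of c "-c" x] by (simp add: eq_neg_iff_add_eq_0 add.commute)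

lemma scaleC_minus_right: "c *\<^sub>C (- x::'a::chilbert_space) = - (c *\<^sub>C x)"
  using scaleC_add_right[of c x "-x"] by (simp add: eq_neg_iff_add_eq_0 add.commute)

lemma scaleC_diff_left: "(c - d) *\<^sub>C (x::'a::chilbert_space) = c *\<^sub>C x - d *\<^sub>C x"
  using scaleC_add_left[of c "-d" x] by (simp add: scaleC_minus_left)

lemma scaleC_diff_right: "c *\<^sub>C (x - y::'a::chilbert_space) = c *\<^sub>C x - c *\<^sub>C y"
  using scaleC_add_right[of c x "-y"] by (simp add: scaleC_minus_right)

lemma cinner_add_left: "cinner (x + y) (z::'a::chilbert_space) = cinner x z + cinner y z"
  by (subst (1 2 3) cinner_commute) (simp add: cinner_add_right)

lemma cinner_scaleC_left: "cinner (c *\<^sub>C x) (y::'a::chilbert_space) = cnj c * cinner x y"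
  by (subst (1 2) cinner_commute) (simp add: cinner_scaleC_right)

lemma cinner_zero_right [simp]: "cinner x (0::'a::chilbert_space) = 0"
  using cinner_scaleC_right[of x 0 0] by simp

lemma cinner_diff_right: "cinner x (y - z::'a::chilbert_space) = cinner x y - cinner x z"
  using cinner_add_right[of x y "-z"] cinner_scaleC_right[of x "-1" z]
  by (simp add: scaleC_minus_left scaleC_one)

lemma cinner_diff_left: "cinner (x - y) (z::'a::chilbert_space) = cinner x z - cinner y z"
  by (subst (1 2 3) cinner_commute) (simp add: cinner_diff_right)

lemma cinner_scaleR_right: "cinner x (t *\<^sub>R y::'a::chilbert_space) = of_real t * cinner x y"
  by (simp add: scaleR_scaleC cinner_scaleC_right)

lemma cinner_scaleR_left: "cinner (t *\<^sub>R x) (y::'a::chilbert_space) = of_real t * cinner x y"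
  by (simp add: scaleR_scaleC cinner_scaleC_left)

lemma cinner_self: "cinner x (x::'a::chilbert_space) = of_real ((norm x)\<^sup>2)"
proof -
  have "Im (cinner x x) = 0"
    using cinner_commute[of x x] by (simp add: complex_eq_iff)
  moreover have "Re (cinner x x) \<ge> 0"
    using norm_eq_sqrt_cinner[of x] norm_ge_zero[of x] by (metis real_sqrt_lt_0_iff not_le)
  ultimately show ?thesis
    by (simp add: complex_eq_iff norm_eq_sqrt_cinner)
qed

lemma cinner_self_eq_0 [simp]: "cinner x (x::'a::chilbert_space) = 0 \<longleftrightarrow> x = 0"
  unfolding cinner_self by simp

lemma norm_scaleC: "norm (c *\<^sub>C (x::'a::chilbert_space)) = cmod c * norm x"
proof -
  have "of_real ((norm (c *\<^sub>C x))\<^sup>2) = cinner (c *\<^sub>C x) (c *\<^sub>C x)"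
    by (rule cinner_self[symmetric])
  also have "\<dots> = cnj c * c * cinner x x"
    by (simp add: cinner_scaleC_left cinner_scaleC_right)
  also have "\<dots> = of_real ((cmod c)\<^sup>2) * of_real ((norm x)\<^sup>2)"
    by (subst complex_norm_square) (simp add: cinner_self mult.commute)
  also have "\<dots> = of_real ((cmod c * norm x)\<^sup>2)"
    by (simp add: power_mult_distrib)
  finally have "(norm (c *\<^sub>C x))\<^sup>2 = (cmod c * norm x)\<^sup>2"
    by (simp only: of_real_eq_iff)
  then show ?thesis
    by (simp add: power2_eq_iff_nonneg)
qed

lemma norm_add_square:
  "(norm (x + y::'a::chilbert_space))\<^sup>2 = (norm x)\<^sup>2 + (norm y)\<^sup>2 + 2 * Re (cinner x y)"
proof -
  have "of_real ((norm (x + y))\<^sup>2) = cinner (x + y) (x + y)"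
    by (rule cinner_self[symmetric])
  also have "\<dots> = cinner x x + cinner y y + (cinner x y + cnj (cinner x y))"
    by (simp add: cinner_add_left cinner_add_right cinner_commute[of y x])
  finally show ?thesis
    by (simp add: cinner_self complex_eq_iff)
qed

lemma norm_diff_square:
  "(norm (x - y::'a::chilbert_space))\<^sup>2 = (norm x)\<^sup>2 + (norm y)\<^sup>2 - 2 * Re (cinner x y)"
  using norm_add_square[of x "-y"] cinner_diff_right[of x 0 y] by simp

lemma parallelogram_law:
  "(norm (x + y::'a::chilbert_space))\<^sup>2 + (norm (x - y))\<^sup>2 = 2 * (norm x)\<^sup>2 + 2 * (norm y)\<^sup>2"
  by (simp add: norm_add_square norm_diff_square)

lemma cinner_cauchy_schwarz: "cmod (cinner x (y::'a::chilbert_space)) \<le> norm x * norm y"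
proof -
  have Re_le: "Re (cinner x z) \<le> norm x * norm z" for z :: 'a
  proof -
    have "(norm (x + z))\<^sup>2 \<le> (norm x + norm z)\<^sup>2"
      by (simp add: power_mono norm_triangle_ineq)
    then show ?thesis
      by (simp add: norm_add_square power2_sum)
  qed
  show ?thesis
  proof (cases "cinner x y = 0")
    case False
    define d where "d = cnj (cinner x y) / of_real (cmod (cinner x y))"
    have "d * cinner x y = of_real ((cmod (cinner x y))\<^sup>2) / of_real (cmod (cinner x y))"
      unfolding d_def complex_norm_square by (simp add: mult.commute)
    then have "d * cinner x y = of_real (cmod (cinner x y))"
      using False by (simp add: power2_eq_square)
    then have "cmod (cinner x y) = Re (cinner x (d *\<^sub>C y))"
      by (simp add: cinner_scaleC_right)
    also have "\<dots> \<le> norm x * norm y"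
      using Re_le[of "d *\<^sub>C y"] False by (simp add: norm_scaleC d_def norm_divide)
    finally show ?thesis .
  qed simp
qed

lemma bounded_linear_scaleC_right: "bounded_linear (\<lambda>x::'a::chilbert_space. c *\<^sub>C x)"
  by (rule bounded_linear_intro[where K="cmod c"])
    (simp_all add: scaleC_add_right scaleR_scaleC scaleC_scaleC mult.commute norm_scaleC)

lemma bounded_linear_cinner_right: "bounded_linear (\<lambda>x::'a::chilbert_space. cinner u x)"
  by (rule bounded_linear_intro[where K="norm u"])
    (simp_all add: cinner_add_right cinner_scaleR_right scaleR_conv_of_real
      cinner_cauchy_schwarz[of u, unfolded mult.commute[of "norm u"]])

lemma bounded_linear_cinner_left: "bounded_linear (\<lambda>x::'a::chilbert_space. cinner x u)"
  by (rule bounded_linear_intro[where K="norm u"])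
    (simp_all add: cinner_add_left cinner_scaleR_left scaleR_conv_of_real cinner_cauchy_schwarz)

lemmas tendsto_scaleC [tendsto_intros] = bounded_linear.tendsto[OF bounded_linear_scaleC_right]
lemmas tendsto_cinner_right = bounded_linear.tendsto[OF bounded_linear_cinner_right]
lemmas continuous_on_scaleC [continuous_intros] =
  bounded_linear.continuous_on[OF bounded_linear_scaleC_right]

lemma orthogonal_to_dense_eq_0:
  fixes v :: "'a::chilbert_space"
  assumes "closure D = UNIV" and "\<And>x. x \<in> D \<Longrightarrow> cinner x v = 0"
  shows "v = 0"
proof -
  have "closed {x. cinner x v = 0}"
    by (intro closed_Collect_eq continuous_on_const linear_continuous_on bounded_linear_cinner_left)
  then have "closure D \<subseteq> {x. cinner x v = 0}"
    using assms(2) by (intro closure_minimal) auto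
  then show ?thesis
    using assms(1) cinner_self_eq_0[of v] by blast
qed

lemma bounded_linear_eq_on_dense:
  fixes F G :: "'a::chilbert_space \<Rightarrow> 'a"
  assumes "closure D = UNIV" and "bounded_linear F" and "bounded_linear G"
    and "\<And>y. y \<in> D \<Longrightarrow> F y = G y"
  shows "F x = G x"
proof -
  have "closed {x. F x = G x}"
    using assms(2,3) by (intro closed_Collect_eq linear_continuous_on)
  then have "closure D \<subseteq> {x. F x = G x}"
    using assms(4) by (intro closure_minimal) auto
  then show ?thesis
    using assms(1) by auto
qed

section \<open>Closed subspaces and the projection theorem\<close>

lemma Cauchy_if_square_dist_le:
  fixes x :: "nat \<Rightarrow> 'a::real_normed_vector"
  assumes g: "g \<longlonglongrightarrow> 0" and le: "\<And>n k. (norm (x n - x k))\<^sup>2 \<le> g n + g k"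
  shows "Cauchy x"
proof (rule CauchyI)
  fix e :: real
  assume "e > 0"
  then have "\<forall>\<^sub>F n in sequentially. g n < e\<^sup>2 / 2"
    using order_tendstoD(2)[OF g, of "e\<^sup>2 / 2"] by simp
  then obtain N where N: "\<And>n. n \<ge> N \<Longrightarrow> g n < e\<^sup>2 / 2"
    by (auto simp: eventually_sequentially)
  have "norm (x n - x k) < e" if "n \<ge> N" "k \<ge> N" for n k
  proof -
    have "(norm (x n - x k))\<^sup>2 < e\<^sup>2"
      using le[of n k] N[OF that(1)] N[OF that(2)] by linarith
    then show ?thesis
      using \<open>e > 0\<close> by (simp add: power_less_imp_less_base)
  qed
  then show "\<exists>M. \<forall>n\<ge>M. \<forall>k\<ge>M. norm (x n - x k) < e"
    by blast
qed

lemma Cauchy_if_dist_dominated: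
  fixes x :: "nat \<Rightarrow> 'a::real_normed_vector" and y :: "nat \<Rightarrow> 'b::real_normed_vector"
  assumes "Cauchy y" and "C > 0" and le: "\<And>n k. C * norm (x n - x k) \<le> norm (y n - y k)"
  shows "Cauchy x"
proof (rule CauchyI)
  fix e :: real
  assume "e > 0"
  then obtain N where N: "\<And>n k. n \<ge> N \<Longrightarrow> k \<ge> N \<Longrightarrow> norm (y n - y k) < C * e"
    using CauchyD[OF \<open>Cauchy y\<close>, of "C * e"] \<open>C > 0\<close> by auto
  have "norm (x n - x k) < e" if "n \<ge> N" "k \<ge> N" for n k
    using le[of n k] N[OF that] \<open>C > 0\<close> mult_less_cancel_left_pos[of C] by fastforce
  then show "\<exists>M. \<forall>n\<ge>M. \<forall>k\<ge>M. norm (x n - x k) < e"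
    by blast
qed

lemma closed_csubspace_best_approximation:
  fixes M :: "'a::chilbert_space set"
  assumes "closed M" and sub: "csubspace M"
  obtains m0 where "m0 \<in> M" and "\<And>m. m \<in> M \<Longrightarrow> norm (y - m0) \<le> norm (y - m)"
proof -
  have M0: "0 \<in> M" and Madd: "\<And>u v. u \<in> M \<Longrightarrow> v \<in> M \<Longrightarrow> u + v \<in> M"
    and MsR: "\<And>t u. u \<in> M \<Longrightarrow> t *\<^sub>R u \<in> M"
    using sub by (auto simp: csubspace_def scaleR_scaleC)
  have "M \<noteq> {}"
    using M0 by blast
  define d where "d = infdist y M"
  have d_le: "\<And>m. m \<in> M \<Longrightarrow> d \<le> norm (y - m)"
    using infdist_le[of _ M y] by (simp add: d_def dist_norm)
  have "\<exists>x\<in>M. norm (y - x) < d + inverse (real (Suc n))" for n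
  proof (rule ccontr)
    assume "\<not> ?thesis"
    then have "d + inverse (real (Suc n)) \<le> d"
      unfolding d_def infdist_notempty[OF \<open>M \<noteq> {}\<close>]
      using \<open>M \<noteq> {}\<close> by (intro cINF_greatest) (auto simp: dist_norm not_less)
    then show False
      by simp
  qed
  then obtain m where mM: "\<And>n. m n \<in> M"
    and m_lt: "\<And>n. norm (y - m n) < d + inverse (real (Suc n))"
    by metis
  define e where "e n = norm (y - m n)" for n
  have e_bounds: "d \<le> e n" "e n \<le> d + inverse (real (Suc n))" for n
    using d_le[OF mM] m_lt[of n] by (simp_all add: e_def)
  have lim: "(\<lambda>n. d + inverse (real (Suc n))) \<longlonglongrightarrow> d"
    using tendsto_add[OF tendsto_const LIMSEQ_inverse_real_of_nat] by simp
  have e: "e \<longlonglongrightarrow> d"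
  proof (rule tendsto_sandwich[OF _ _ tendsto_const lim])
    show "\<forall>\<^sub>F n in sequentially. d \<le> e n"
      by (intro always_eventually allI e_bounds)
    show "\<forall>\<^sub>F n in sequentially. e n \<le> d + inverse (real (Suc n))"
      by (intro always_eventually allI e_bounds)
  qed
  have "(norm (m n - m k))\<^sup>2 \<le> 2 * ((e n)\<^sup>2 - d\<^sup>2) + 2 * ((e k)\<^sup>2 - d\<^sup>2)" for n k
  proof -
    have "(y - m n) + (y - m k) = 2 *\<^sub>R (y - (1/2) *\<^sub>R (m n + m k))"
      by (simp add: algebra_simps scaleR_2)
    then have "2 * d \<le> norm ((y - m n) + (y - m k))"
      using d_le[OF MsR[OF Madd[OF mM mM]], of "1/2" n k] by simp
    then have "(2 * d)\<^sup>2 \<le> (norm ((y - m n) + (y - m k)))\<^sup>2"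
      using infdist_nonneg[of y M] by (intro power_mono) (auto simp: d_def)
    then show ?thesis
      using parallelogram_law[of "y - m n" "y - m k"]
      by (simp add: e_def power_mult_distrib norm_minus_commute)
  qed
  then have "Cauchy m"
    by (intro Cauchy_if_square_dist_le[where g="\<lambda>n. 2 * ((e n)\<^sup>2 - d\<^sup>2)"])
      (auto intro!: tendsto_eq_intros e)
  then obtain m0 where m0: "m \<longlonglongrightarrow> m0"
    using Cauchy_convergent_iff convergent_def by blast
  have "m0 \<in> M"
    using \<open>closed M\<close> mM m0 closed_sequential_limits by blast
  moreover have "e \<longlonglongrightarrow> norm (y - m0)"
    unfolding e_def by (intro tendsto_intros m0)
  then have "norm (y - m0) = d"
    using e LIMSEQ_unique by blast
  ultimately show ?thesis
    using d_le that by auto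
qed

lemma Re_cinner_eq_0_if_norm_minimal:
  fixes v w :: "'a::chilbert_space"
  assumes "\<And>t::real. norm v \<le> norm (v - t *\<^sub>R w)"
  shows "Re (cinner v w) = 0"
proof (cases "w = 0")
  case False
  define t where "t = Re (cinner v w) / (norm w)\<^sup>2"
  have "(norm v)\<^sup>2 \<le> (norm (v - t *\<^sub>R w))\<^sup>2"
    using assms[of t] by (simp add: power_mono)
  also have "\<dots> = (norm v)\<^sup>2 + t * (t * (norm w)\<^sup>2) - 2 * t * Re (cinner v w)"
    by (simp add: norm_diff_square cinner_scaleR_right power_mult_distrib power2_eq_square[of t])
  also have "t * (norm w)\<^sup>2 = Re (cinner v w)"
    using False by (simp add: t_def)
  finally have "t * Re (cinner v w) \<le> 0"
    by simp
  moreover have "(Re (cinner v w))\<^sup>2 = (norm w)\<^sup>2 * (t * Re (cinner v w))"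
    using \<open>t * (norm w)\<^sup>2 = Re (cinner v w)\<close> by (simp add: power2_eq_square[of "Re _"] mult_ac)
  ultimately have "(Re (cinner v w))\<^sup>2 \<le> 0"
    by (simp add: mult_nonneg_nonpos)
  then show ?thesis
    by simp
qed simp

lemma best_approximation_orthogonal:
  fixes M :: "'a::chilbert_space set"
  assumes sub: "csubspace M" and "m0 \<in> M"
    and min: "\<And>m. m \<in> M \<Longrightarrow> norm (y - m0) \<le> norm (y - m)" and "w \<in> M"
  shows "cinner w (y - m0) = 0"
proof -
  have Re0: "Re (cinner (y - m0) u) = 0" if "u \<in> M" for u
  proof (rule Re_cinner_eq_0_if_norm_minimal)
    fix t :: real
    have "m0 + t *\<^sub>R u \<in> M"
      using sub \<open>m0 \<in> M\<close> that by (simp add: csubspace_def scaleR_scaleC)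
    then show "norm (y - m0) \<le> norm (y - m0 - t *\<^sub>R u)"
      using min by (simp add: diff_diff_eq)
  qed
  have "\<i> *\<^sub>C w \<in> M"
    using sub \<open>w \<in> M\<close> by (simp add: csubspace_def)
  then have "Im (cinner (y - m0) w) = 0"
    using Re0 by (fastforce simp: cinner_scaleC_right)
  then have "cinner (y - m0) w = 0"
    using Re0[OF \<open>w \<in> M\<close>] by (simp add: complex_eq_iff)
  then show ?thesis
    by (subst cinner_commute) simp
qed

lemma closed_csubspace_eq_UNIV:
  fixes M :: "'a::chilbert_space set"
  assumes "closed M" and "csubspace M"
    and orth: "\<And>v. (\<forall>m\<in>M. cinner m v = 0) \<Longrightarrow> v = 0"
  shows "M = UNIV"
proof -
  have "y \<in> M" for y
  proof -
    obtain m0 where "m0 \<in> M" and "\<And>m. m \<in> M \<Longrightarrow> norm (y - m0) \<le> norm (y - m)"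
      using closed_csubspace_best_approximation assms(1,2) by blast
    then have "y - m0 = 0"
      using best_approximation_orthogonal assms(2) orth by blast
    then show ?thesis
      using \<open>m0 \<in> M\<close> by simp
  qed
  then show ?thesis
    by blast
qed

section \<open>Self-adjoint operators and their resolvents\<close>

lemma dom_lop_shift [simp]: "dom (lop_shift T c) = dom T"
  and app_lop_shift [simp]: "app (lop_shift T c) x = app T x - c *\<^sub>C x"
  and dom_lop_comp [simp]: "dom (lop_comp S T) = {x \<in> dom T. app T x \<in> dom S}"
  and app_lop_comp [simp]: "app (lop_comp S T) x = app S (app T x)"
  by (simp_all add: lop_shift_def lop_comp_def dom_def app_def)

context
  fixes T :: "'a::chilbert_space lop"
  assumes lin: "linear_op T"
begin

lemma linear_op_dom_add: "x \<in> dom T \<Longrightarrow> y \<in> dom T \<Longrightarrow> x + y \<in> dom T"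
  and linear_op_dom_scaleC: "x \<in> dom T \<Longrightarrow> c *\<^sub>C x \<in> dom T"
  using lin by (auto simp: linear_op_def csubspace_def)

lemma linear_op_app_add: "x \<in> dom T \<Longrightarrow> y \<in> dom T \<Longrightarrow> app T (x + y) = app T x + app T y"
  and linear_op_app_scaleC: "x \<in> dom T \<Longrightarrow> app T (c *\<^sub>C x) = c *\<^sub>C app T x"
  using lin by (auto simp: linear_op_def)

lemma linear_op_dom_diff_scaleC: "x \<in> dom T \<Longrightarrow> y \<in> dom T \<Longrightarrow> x - c *\<^sub>C y \<in> dom T"
  using linear_op_dom_add[of x "(- c) *\<^sub>C y"] linear_op_dom_scaleC[of y "- c"]
  by (simp add: scaleC_minus_left)

lemma linear_op_app_diff_scaleC:
  "x \<in> dom T \<Longrightarrow> y \<in> dom T \<Longrightarrow> app T (x - c *\<^sub>C y) = app T x - c *\<^sub>C app T y"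
  using linear_op_app_add[of x "(- c) *\<^sub>C y"] linear_op_app_scaleC[of y "- c"]
    linear_op_dom_scaleC[of y "- c"] by (simp add: scaleC_minus_left)

lemma linear_op_dom_diff: "x \<in> dom T \<Longrightarrow> y \<in> dom T \<Longrightarrow> x - y \<in> dom T"
  using linear_op_dom_diff_scaleC[of x y 1] by (simp add: scaleC_one)

lemma linear_op_app_diff: "x \<in> dom T \<Longrightarrow> y \<in> dom T \<Longrightarrow> app T (x - y) = app T x - app T y"
  using linear_op_app_diff_scaleC[of x y 1] by (simp add: scaleC_one)

end

lemma linear_op_shift_range_csubspace:
  assumes lin: "linear_op S"
  shows "csubspace ((\<lambda>x. app S x - z *\<^sub>C x) ` dom S)"
  unfolding csubspace_def
proof (intro conjI ballI allI)
  have "0 \<in> dom S"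
    using lin by (simp add: linear_op_def csubspace_def)
  moreover have "app S 0 = 0"
    using linear_op_app_scaleC[OF lin \<open>0 \<in> dom S\<close>, of 0] by simp
  ultimately show "0 \<in> (\<lambda>x. app S x - z *\<^sub>C x) ` dom S"
    by (auto intro!: rev_image_eqI[of 0])
next
  fix u v
  assume "u \<in> (\<lambda>x. app S x - z *\<^sub>C x) ` dom S" "v \<in> (\<lambda>x. app S x - z *\<^sub>C x) ` dom S"
  then obtain x1 x2 where x: "x1 \<in> dom S" "x2 \<in> dom S"
    and "u = app S x1 - z *\<^sub>C x1" "v = app S x2 - z *\<^sub>C x2"
    by blast
  then have "u + v = app S (x1 + x2) - z *\<^sub>C (x1 + x2)"
    using linear_op_app_add[OF lin x] by (simp add: scaleC_add_right)
  then show "u + v \<in> (\<lambda>x. app S x - z *\<^sub>C x) ` dom S"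
    using linear_op_dom_add[OF lin x] by blast
next
  fix c u
  assume "u \<in> (\<lambda>x. app S x - z *\<^sub>C x) ` dom S"
  then obtain x where x: "x \<in> dom S" and "u = app S x - z *\<^sub>C x"
    by blast
  then have "c *\<^sub>C u = app S (c *\<^sub>C x) - z *\<^sub>C (c *\<^sub>C x)"
    using linear_op_app_scaleC[OF lin x] by (simp add: scaleC_diff_right scaleC_scaleC mult.commute)
  then show "c *\<^sub>C u \<in> (\<lambda>x. app S x - z *\<^sub>C x) ` dom S"
    using linear_op_dom_scaleC[OF lin x] by blast
qed

lemma self_adjoint_symmetric:
  assumes "self_adjoint S" "x \<in> dom S" "y \<in> dom S"
  shows "cinner (app S x) y = cinner x (app S y)"
proof -
  have eq: "lop_eq (adjoint S) S"
    using assms(1) by (simp add: self_adjoint_def)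
  then have "y \<in> dom (adjoint S)"
    using assms(3) by (simp add: lop_eq_def)
  then have "\<exists>z. \<forall>x\<in>dom S. cinner (app S x) y = cinner x z"
    by (simp add: adjoint_def dom_def)
  then have "\<forall>x\<in>dom S. cinner (app S x) y = cinner x (app (adjoint S) y)"
    unfolding adjoint_def app_def snd_conv by (rule someI_ex)
  moreover have "app (adjoint S) y = app S y"
    using eq assms(3) by (simp add: lop_eq_def)
  ultimately show ?thesis
    using assms(2) by simp
qed

lemma self_adjoint_adjointI:
  assumes sa: "self_adjoint S" and h: "\<And>x. x \<in> dom S \<Longrightarrow> cinner (app S x) y = cinner x w"
  shows "y \<in> dom S" "app S y = w"
proof -
  have "lop_eq (adjoint S) S"
    using sa by (simp add: self_adjoint_def)
  moreover have "y \<in> dom (adjoint S)"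
    using h by (auto simp: adjoint_def dom_def)
  ultimately show y: "y \<in> dom S"
    by (simp add: lop_eq_def)
  have "app S y - w = 0"
  proof (rule orthogonal_to_dense_eq_0)
    show "closure (dom S) = UNIV"
      using sa by (simp add: self_adjoint_def densely_defined_def)
    show "cinner x (app S y - w) = 0" if "x \<in> dom S" for x
      using self_adjoint_symmetric[OF sa that y] h[OF that] by (simp add: cinner_diff_right)
  qed
  then show "app S y = w"
    by simp
qed

lemma self_adjoint_shift_lower_bound:
  assumes sa: "self_adjoint S" and x: "x \<in> dom S"
  shows "\<bar>Im z\<bar> * norm x \<le> norm (app S x - z *\<^sub>C x)"
proof -
  have "Im (cinner x (app S x)) = 0"
    using self_adjoint_symmetric[OF sa x x] cinner_commute[of "app S x" x]
    by (simp add: complex_eq_iff)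
  then have "Im (cinner x (app S x - z *\<^sub>C x)) = - Im z * (norm x)\<^sup>2"
    by (simp add: cinner_diff_right cinner_scaleC_right cinner_self)
  then have "\<bar>Im z\<bar> * (norm x * norm x) \<le> cmod (cinner x (app S x - z *\<^sub>C x))"
    using abs_Im_le_cmod[of "cinner x (app S x - z *\<^sub>C x)"] by (simp add: abs_mult power2_eq_square)
  then have "\<bar>Im z\<bar> * norm x * norm x \<le> norm x * norm (app S x - z *\<^sub>C x)"
    using cinner_cauchy_schwarz[of x "app S x - z *\<^sub>C x"] by (simp add: mult.assoc)
  then show ?thesis
    by (cases "norm x = 0") (auto simp: mult.commute mult_le_cancel_left)
qed

lemma self_adjoint_shift_inj:
  assumes sa: "self_adjoint S" and z: "Im z \<noteq> 0" and "x1 \<in> dom S" "x2 \<in> dom S"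
    and eq: "app S x1 - z *\<^sub>C x1 = app S x2 - z *\<^sub>C x2"
  shows "x1 = x2"
proof -
  have lin: "linear_op S"
    using sa by (simp add: self_adjoint_def)
  have "app S (x1 - x2) - z *\<^sub>C (x1 - x2) = (app S x1 - z *\<^sub>C x1) - (app S x2 - z *\<^sub>C x2)"
    using linear_op_app_diff[OF lin assms(3,4)] by (simp add: scaleC_diff_right algebra_simps)
  then have "app S (x1 - x2) - z *\<^sub>C (x1 - x2) = 0"
    using eq by simp
  then have "\<bar>Im z\<bar> * norm (x1 - x2) \<le> 0"
    using self_adjoint_shift_lower_bound[OF sa linear_op_dom_diff[OF lin assms(3,4)], of z] by simp
  then show ?thesis
    using z by (simp add: mult_le_0_iff)
qed

lemma self_adjoint_shift_range_closed:
  assumes sa: "self_adjoint S" and z: "Im z \<noteq> 0"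
  shows "closed ((\<lambda>x. app S x - z *\<^sub>C x) ` dom S)"
  unfolding closed_sequential_limits
proof (intro allI impI, elim conjE)
  fix y l
  assume "\<forall>n. y n \<in> (\<lambda>x. app S x - z *\<^sub>C x) ` dom S" and lim: "y \<longlonglongrightarrow> l"
  then have "\<forall>n. \<exists>x. x \<in> dom S \<and> y n = app S x - z *\<^sub>C x"
    by blast
  then obtain x where x: "\<And>n. x n \<in> dom S" and y: "\<And>n. y n = app S (x n) - z *\<^sub>C x n"
    by (auto dest!: choice)
  have lin: "linear_op S"
    using sa by (simp add: self_adjoint_def)
  have "Cauchy x"
  proof (rule Cauchy_if_dist_dominated[OF LIMSEQ_imp_Cauchy[OF lim]])
    show "\<bar>Im z\<bar> * norm (x n - x k) \<le> norm (y n - y k)" for n k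
      using self_adjoint_shift_lower_bound[OF sa linear_op_dom_diff[OF lin x x], of z]
        linear_op_app_diff[OF lin x x] by (simp add: y scaleC_diff_right algebra_simps)
  qed (use z in simp)
  then obtain x0 where x0: "x \<longlonglongrightarrow> x0"
    using Cauchy_convergent_iff convergent_def by blast
  have Sx: "(\<lambda>n. app S (x n)) \<longlonglongrightarrow> l + z *\<^sub>C x0"
    using tendsto_add[OF lim tendsto_scaleC[OF x0, of z]] by (simp add: y)
  have "cinner (app S u) x0 = cinner u (l + z *\<^sub>C x0)" if u: "u \<in> dom S" for u
  proof (rule LIMSEQ_unique)
    show "(\<lambda>n. cinner u (app S (x n))) \<longlonglongrightarrow> cinner (app S u) x0"
      using tendsto_cinner_right[OF x0, of "app S u"] self_adjoint_symmetric[OF sa u x] by simp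
    show "(\<lambda>n. cinner u (app S (x n))) \<longlonglongrightarrow> cinner u (l + z *\<^sub>C x0)"
      by (rule tendsto_cinner_right[OF Sx])
  qed
  then have "x0 \<in> dom S" "l = app S x0 - z *\<^sub>C x0"
    using self_adjoint_adjointI[OF sa] by auto
  then show "l \<in> (\<lambda>x. app S x - z *\<^sub>C x) ` dom S"
    by blast
qed

lemma self_adjoint_shift_surj:
  assumes sa: "self_adjoint S" and z: "Im z \<noteq> 0"
  shows "(\<lambda>x. app S x - z *\<^sub>C x) ` dom S = UNIV"
proof (rule closed_csubspace_eq_UNIV)
  show "closed ((\<lambda>x. app S x - z *\<^sub>C x) ` dom S)"
    using self_adjoint_shift_range_closed[OF assms] .
  show "csubspace ((\<lambda>x. app S x - z *\<^sub>C x) ` dom S)"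
    using sa by (intro linear_op_shift_range_csubspace) (simp add: self_adjoint_def)
next
  fix v
  assume "\<forall>m\<in>(\<lambda>x. app S x - z *\<^sub>C x) ` dom S. cinner m v = 0"
  then have "cinner (app S x) v = cinner x (cnj z *\<^sub>C v)" if "x \<in> dom S" for x
    using that by (auto simp: cinner_diff_left cinner_scaleC_left cinner_scaleC_right)
  then have "v \<in> dom S" "app S v - cnj z *\<^sub>C v = 0"
    using self_adjoint_adjointI[OF sa] by auto
  then show "v = 0"
    using self_adjoint_shift_lower_bound[OF sa, of v "cnj z"] z by (simp add: mult_le_0_iff)
qed

lemma self_adjoint_shift_ex1:
  assumes "self_adjoint S" and "Im z \<noteq> 0"
  shows "\<exists>!x. x \<in> dom S \<and> app S x - z *\<^sub>C x = y"
proof -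
  have "y \<in> (\<lambda>x. app S x - z *\<^sub>C x) ` dom S"
    using self_adjoint_shift_surj[OF assms] by simp
  then show ?thesis
    using self_adjoint_shift_inj[OF assms] by blast
qed

lemma nonreal_in_resolvent_set:
  assumes sa: "self_adjoint S" and z: "Im z \<noteq> 0"
  shows "z \<in> resolvent_set S"
proof -
  have "norm x \<le> inverse \<bar>Im z\<bar> * norm (app S x - z *\<^sub>C x)" if "x \<in> dom S" for x
    using self_adjoint_shift_lower_bound[OF sa that, of z] z by (simp add: field_simps)
  then show ?thesis
    unfolding resolvent_set_def using self_adjoint_shift_ex1[OF sa z] by blast
qed

context
  fixes S :: "'a::chilbert_space lop" and z :: complex
  assumes sa: "self_adjoint S" and nonreal: "Im z \<noteq> 0"
begin

lemma resolvent_in_dom: "resolvent S z y \<in> dom S"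
  and shift_resolvent: "app S (resolvent S z y) - z *\<^sub>C resolvent S z y = y"
  using theI'[OF self_adjoint_shift_ex1[OF sa nonreal, of y]] unfolding resolvent_def by auto

lemma resolvent_shift: "x \<in> dom S \<Longrightarrow> resolvent S z (app S x - z *\<^sub>C x) = x"
  using self_adjoint_shift_inj[OF sa nonreal resolvent_in_dom] shift_resolvent by blast

lemma resolvent_add: "resolvent S z (y1 + y2) = resolvent S z y1 + resolvent S z y2"
proof -
  have lin: "linear_op S"
    using sa by (simp add: self_adjoint_def)
  note d = resolvent_in_dom[of y1] resolvent_in_dom[of y2]
  have "y1 + y2 = app S (resolvent S z y1 + resolvent S z y2)
      - z *\<^sub>C (resolvent S z y1 + resolvent S z y2)"
    using linear_op_app_add[OF lin d] shift_resolvent[of y1] shift_resolvent[of y2]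
    by (simp add: scaleC_add_right algebra_simps)
  then show ?thesis
    using resolvent_shift[OF linear_op_dom_add[OF lin d]] by simp
qed

lemma resolvent_scaleC: "resolvent S z (c *\<^sub>C y) = c *\<^sub>C resolvent S z y"
proof -
  have lin: "linear_op S"
    using sa by (simp add: self_adjoint_def)
  note d = resolvent_in_dom[of y]
  have "app S (c *\<^sub>C resolvent S z y) - z *\<^sub>C (c *\<^sub>C resolvent S z y)
      = c *\<^sub>C (app S (resolvent S z y) - z *\<^sub>C resolvent S z y)"
    using linear_op_app_scaleC[OF lin d] by (simp add: scaleC_diff_right scaleC_scaleC mult.commute)
  then have "c *\<^sub>C y = app S (c *\<^sub>C resolvent S z y) - z *\<^sub>C (c *\<^sub>C resolvent S z y)"
    by (simp add: shift_resolvent)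
  then show ?thesis
    using resolvent_shift[OF linear_op_dom_scaleC[OF lin d]] by simp
qed

lemma bounded_linear_resolvent: "bounded_linear (resolvent S z)"
proof (rule bounded_linear_intro[where K="inverse \<bar>Im z\<bar>"])
  show "norm (resolvent S z x) \<le> norm x * inverse \<bar>Im z\<bar>" for x
    using self_adjoint_shift_lower_bound[OF sa resolvent_in_dom, of z x] shift_resolvent[of x]
      nonreal by (simp add: field_simps)
qed (simp_all add: resolvent_add scaleR_scaleC resolvent_scaleC)

end

lemma cinner_resolvent:
  assumes sa: "self_adjoint S" and z: "Im z \<noteq> 0"
  shows "cinner (resolvent S z x) y = cinner x (resolvent S (cnj z) y)"
proof -
  let ?u = "resolvent S z x" and ?v = "resolvent S (cnj z) y"
  have z': "Im (cnj z) \<noteq> 0"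
    using z by simp
  have "cinner x ?v = cinner (app S ?u) ?v - cnj z * cinner ?u ?v"
    by (subst shift_resolvent[OF sa z, of x, symmetric]) (simp add: cinner_diff_left cinner_scaleC_left)
  also have "\<dots> = cinner ?u (app S ?v - cnj z *\<^sub>C ?v)"
    using self_adjoint_symmetric[OF sa resolvent_in_dom[OF sa z] resolvent_in_dom[OF sa z']]
    by (simp add: cinner_diff_right cinner_scaleC_right)
  finally show ?thesis
    using shift_resolvent[OF sa z'] by simp
qed

lemma badjoint_eqI:
  fixes N M :: "'a::chilbert_space \<Rightarrow> 'a"
  assumes adj: "\<And>x y. cinner (N x) y = cinner x (M y)"
  shows "badjoint N = M"
proof
  fix y
  show "badjoint N y = M y"
    unfolding badjoint_def
  proof (rule the_equality)
    fix w
    assume "\<forall>x. cinner (N x) y = cinner x w"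
    then have "cinner (w - M y) (w - M y) = 0"
      using adj[of "w - M y" y] by (simp add: cinner_diff_right)
    then show "w = M y"
      by simp
  qed (use adj in blast)
qed

lemma ess_self_adjoint_shift_range_dense:
  assumes ess: "ess_self_adjoint T" and z: "Im z \<noteq> 0"
  shows "closure ((\<lambda>f. app T f - z *\<^sub>C f) ` dom T) = UNIV"
proof -
  obtain S where gS: "graph S = closure (graph T)" and sa: "self_adjoint S"
    using ess unfolding ess_self_adjoint_def by blast
  define g where "g p = snd p - z *\<^sub>C fst p" for p :: "'a \<times> 'a"
  have "continuous_on (closure (graph T)) g"
    unfolding g_def by (intro continuous_intros)
  moreover have "g ` graph T \<subseteq> closure ((\<lambda>f. app T f - z *\<^sub>C f) ` dom T)"
    unfolding g_def graph_def using closure_subset by fastforce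
  ultimately have "g ` closure (graph T) \<subseteq> closure ((\<lambda>f. app T f - z *\<^sub>C f) ` dom T)"
    using image_closure_subset closed_closure by blast
  moreover have "app S x - z *\<^sub>C x = g (x, app S x)" for x
    by (simp add: g_def)
  moreover have "(x, app S x) \<in> closure (graph T)" if "x \<in> dom S" for x
    using that gS by (auto simp: graph_def)
  ultimately have "(\<lambda>x. app S x - z *\<^sub>C x) ` dom S \<subseteq> closure ((\<lambda>f. app T f - z *\<^sub>C f) ` dom T)"
    by auto
  then show ?thesis
    using self_adjoint_shift_surj[OF sa z] by auto
qed

section \<open>The operator \<open>T\<close>\<close>

locale q_setting =
  fixes A B :: "'a::chilbert_space lop" and q r :: complex and a b :: real
  assumes cmod_q: "cmod q = 1" and q_square: "q\<^sup>2 \<noteq> 1"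
    and sa_A: "self_adjoint A" and sa_B: "self_adjoint B"
    and ab_nonzero: "a * b \<noteq> 0" and r_square: "r\<^sup>2 = q"
begin

definition lam :: complex where "lam = of_real a * cnj r"
definition mu :: complex where "mu = of_real b * cnj r"
definition kappa :: complex where "kappa = (cnj r - r) / 2 * of_real a * of_real b"
definition c :: complex where "c = mu * lam * q * (q - 1)"

definition R :: "'a \<Rightarrow> 'a" where "R x = resolvent A lam (resolvent B mu x)"
definition R' :: "'a \<Rightarrow> 'a" where "R' x = resolvent B (mu * q) (resolvent A (lam * q) x)"

abbreviation V :: "'a \<Rightarrow> 'a" where "V \<equiv> app (lop_comp (lop_shift B mu) (lop_shift A lam))"
abbreviation W :: "'a \<Rightarrow> 'a" where "W \<equiv> app (lop_comp (lop_shift A (lam * q)) (lop_shift B (mu * q)))"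
abbreviation T :: "'a lop" where "T \<equiv> Top A B q r a b"

lemma cnj_r_r: "cnj r * r = 1"
proof -
  have "(cmod r)\<^sup>2 = 1"
    using cmod_q r_square by (simp add: norm_power[symmetric])
  then show ?thesis
    using complex_norm_square[of r] by (simp add: mult.commute)
qed

lemma Im_r_nonzero: "Im r \<noteq> 0"
proof
  assume "Im r = 0"
  then have "q = 1"
    using cnj_r_r r_square by (simp add: complex_eq_iff power2_eq_square)
  then show False
    using q_square by simp
qed

lemma lam_q: "lam * q = of_real a * r" and mu_q: "mu * q = of_real b * r"
  unfolding lam_def mu_def r_square[symmetric] power2_eq_square
  by (simp_all add: mult.assoc cnj_r_r flip: mult.assoc[of "cnj r" r r])

lemma nonreal_parameters:
  "Im lam \<noteq> 0" "Im (lam * q) \<noteq> 0" "Im mu \<noteq> 0" "Im (mu * q) \<noteq> 0" "Im kappa \<noteq> 0"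
  using Im_r_nonzero ab_nonzero
  by (auto simp: lam_q mu_q) (simp_all add: lam_def mu_def kappa_def)

lemma cnj_r_q: "cnj r * q = r"
  using cnj_r_r unfolding r_square[symmetric] power2_eq_square by (simp add: mult.assoc[symmetric])

lemma c_eq: "c = of_real a * of_real b * (q - 1)"
proof -
  have "mu * lam * q = of_real a * of_real b * (cnj r * r)"
    by (simp add: mult.assoc lam_q) (simp add: mu_def mult_ac)
  then show ?thesis
    by (simp add: c_def cnj_r_r)
qed

lemma c_nonzero: "c \<noteq> 0"
  using ab_nonzero q_square by (auto simp: c_eq)

lemma cnj_r_c: "cnj r * c = - 2 * kappa"
proof -
  have "cnj r * c = of_real a * of_real b * (cnj r * q - cnj r)"
    by (simp add: c_eq algebra_simps)
  also have "\<dots> = of_real a * of_real b * (r - cnj r)"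
    by (simp add: cnj_r_q)
  also have "\<dots> = - 2 * kappa"
    by (simp add: kappa_def algebra_simps)
  finally show ?thesis .
qed

lemmas resolvent_A = resolvent_add[OF sa_A] resolvent_scaleC[OF sa_A] resolvent_shift[OF sa_A]
lemmas resolvent_B = resolvent_add[OF sa_B] resolvent_scaleC[OF sa_B] resolvent_shift[OF sa_B]

lemma bounded_linear_R: "bounded_linear R"
  unfolding R_def[abs_def]
  by (rule bounded_linear_compose[OF bounded_linear_resolvent[OF sa_A] bounded_linear_resolvent[OF sa_B]])
    (use nonreal_parameters in blast)+

lemma bounded_linear_R': "bounded_linear R'"
  unfolding R'_def[abs_def]
  by (rule bounded_linear_compose[OF bounded_linear_resolvent[OF sa_B] bounded_linear_resolvent[OF sa_A]])
    (use nonreal_parameters in blast)+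

lemma R_add: "R (x + y) = R x + R y" and R_scaleC: "R (e *\<^sub>C x) = e *\<^sub>C R x"
  and R'_add: "R' (x + y) = R' x + R' y" and R'_scaleC: "R' (e *\<^sub>C x) = e *\<^sub>C R' x"
  unfolding R_def R'_def using nonreal_parameters by (simp_all add: resolvent_A resolvent_B)

lemma cinner_R': "cinner (R' x) y = cinner x (R y)"
proof -
  have "cnj (lam * q) = lam" "cnj (mu * q) = mu"
    unfolding lam_q mu_q by (simp_all add: lam_def mu_def)
  then show ?thesis
    using nonreal_parameters
    by (simp add: R_def R'_def cinner_resolvent[OF sa_A] cinner_resolvent[OF sa_B])
qed

lemma Dq_D:
  assumes "f \<in> Dq A B q"
  shows "f \<in> dom A" "app A f \<in> dom B" "f \<in> dom B" "app B f \<in> dom A"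
    "app A (app B f) = q *\<^sub>C app B (app A f)"
  using assms by (auto simp: Dq_def)

lemma linear_A: "linear_op A" and linear_B: "linear_op B"
  using sa_A sa_B by (simp_all add: self_adjoint_def)

lemma R_V: "f \<in> Dq A B q \<Longrightarrow> R (V f) = f"
  using nonreal_parameters
  by (simp add: R_def Dq_D resolvent_A resolvent_B linear_op_dom_diff_scaleC[OF linear_B])

lemma R'_W: "f \<in> Dq A B q \<Longrightarrow> R' (W f) = f"
  using nonreal_parameters
  by (simp add: R'_def Dq_D resolvent_A resolvent_B linear_op_dom_diff_scaleC[OF linear_A])

text \<open>This is the only place where \<open>ABf = qBAf\<close> is used.\<close>
lemma W_eq: "f \<in> Dq A B q \<Longrightarrow> W f = q *\<^sub>C V f + c *\<^sub>C f"
  by (simp add: Dq_D linear_op_app_diff_scaleC[OF linear_A] linear_op_app_diff_scaleC[OF linear_B]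
      c_def scaleC_diff_right scaleC_add_right scaleC_scaleC algebra_simps
      flip: scaleC_add_left scaleC_diff_left)

lemma dom_T: "dom T = Dq A B q"
  by (simp add: Top_def dom_def)

lemma T_minus_kappa: "app T f - kappa *\<^sub>C f = cnj r *\<^sub>C W f"
  unfolding Top_def app_def[of "(Dq A B q, _)"] by (simp add: kappa_def lam_q mu_q)

lemma T_plus_kappa: "f \<in> Dq A B q \<Longrightarrow> app T f - (- kappa) *\<^sub>C f = r *\<^sub>C V f"
proof -
  assume f: "f \<in> Dq A B q"
  have "app T f - (- kappa) *\<^sub>C f = cnj r *\<^sub>C W f + (2 * kappa) *\<^sub>C f"
    using T_minus_kappa[of f] by (simp add: scaleC_minus_left algebra_simps flip: scaleC_add_left)
  also have "\<dots> = r *\<^sub>C V f"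
    unfolding W_eq[OF f]
    by (simp add: scaleC_add_right scaleC_scaleC cnj_r_q cnj_r_c flip: scaleC_add_left)
  finally show ?thesis .
qed

context
  assumes ess: "ess_self_adjoint T"
begin

lemma first_resolvent_identity: "R x = q *\<^sub>C R' x + c *\<^sub>C R' (R x)"
proof (rule bounded_linear_eq_on_dense[where G="\<lambda>x. q *\<^sub>C R' x + c *\<^sub>C R' (R x)",
      OF ess_self_adjoint_shift_range_dense[OF ess]])
  show "Im (- kappa) \<noteq> 0"
    using nonreal_parameters by simp
  show "bounded_linear R"
    by (rule bounded_linear_R)
  show "bounded_linear (\<lambda>x. q *\<^sub>C R' x + c *\<^sub>C R' (R x))"
    by (intro bounded_linear_add bounded_linear_compose[OF bounded_linear_scaleC_right]
        bounded_linear_compose[OF bounded_linear_R'] bounded_linear_R bounded_linear_R')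
  fix y
  assume "y \<in> (\<lambda>f. app T f - (- kappa) *\<^sub>C f) ` dom T"
  then obtain f where f: "f \<in> Dq A B q" and y: "y = r *\<^sub>C V f"
    using T_plus_kappa dom_T by auto
  define v w where "v = V f" and "w = W f"
  have y_v: "y = r *\<^sub>C v" and R_v: "R v = f" and R'_w: "R' w = f" and w: "w = q *\<^sub>C v + c *\<^sub>C f"
    unfolding v_def w_def by (fact y R_V[OF f] R'_W[OF f] W_eq[OF f])+
  have "R y = r *\<^sub>C R' w"
    by (simp add: y_v R_scaleC R_v R'_w)
  also have "\<dots> = q *\<^sub>C R' y + c *\<^sub>C R' (R y)"
    by (simp add: y_v w R_scaleC R_v R'_add R'_scaleC scaleC_add_right scaleC_scaleC mult.commute)
  finally show "R y = q *\<^sub>C R' y + c *\<^sub>C R' (R y)" .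
qed

lemma second_resolvent_identity: "R x = q *\<^sub>C R' x + c *\<^sub>C R (R' x)"
proof (rule bounded_linear_eq_on_dense[where G="\<lambda>x. q *\<^sub>C R' x + c *\<^sub>C R (R' x)",
      OF ess_self_adjoint_shift_range_dense[OF ess]])
  show "Im kappa \<noteq> 0"
    using nonreal_parameters by simp
  show "bounded_linear R"
    by (rule bounded_linear_R)
  show "bounded_linear (\<lambda>x. q *\<^sub>C R' x + c *\<^sub>C R (R' x))"
    by (intro bounded_linear_add bounded_linear_compose[OF bounded_linear_scaleC_right]
        bounded_linear_compose[OF bounded_linear_R] bounded_linear_R bounded_linear_R')
  fix y
  assume "y \<in> (\<lambda>f. app T f - kappa *\<^sub>C f) ` dom T"
  then obtain f where f: "f \<in> Dq A B q" and y: "y = cnj r *\<^sub>C W f"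
    using T_minus_kappa dom_T by auto
  define v w where "v = V f" and "w = W f"
  have y_w: "y = cnj r *\<^sub>C w" and R_v: "R v = f" and R'_w: "R' w = f" and w: "w = q *\<^sub>C v + c *\<^sub>C f"
    unfolding v_def w_def by (fact y R_V[OF f] R'_W[OF f] W_eq[OF f])+
  have "R y = cnj r *\<^sub>C R (q *\<^sub>C v + c *\<^sub>C f)"
    by (simp add: y_w w R_scaleC)
  also have "\<dots> = q *\<^sub>C R' y + c *\<^sub>C R (R' y)"
    by (simp add: y_w R_add R_scaleC R'_scaleC R_v R'_w scaleC_add_right scaleC_scaleC mult.commute)
  finally show "R y = q *\<^sub>C R' y + c *\<^sub>C R (R' y)" .
qed

lemma normal_R': "normal_op R'"
proof -
  have "c *\<^sub>C R' (R x) = c *\<^sub>C R (R' x)" for x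
    using first_resolvent_identity[of x] second_resolvent_identity[of x] by simp
  then have "R' (R x) = R (R' x)" for x
    using c_nonzero arg_cong[where f="\<lambda>v. inverse c *\<^sub>C v"]
    by (metis scaleC_scaleC left_inverse scaleC_one)
  then show ?thesis
    by (simp add: normal_op_def badjoint_eqI[OF cinner_R'] fun_eq_iff)
qed

end

end

theorem mainTheorem7:
  fixes A B :: "'a::chilbert_space lop" and q r :: complex and a b :: real
  assumes "cmod q = 1" and "q\<^sup>2 \<noteq> 1"
    and "self_adjoint A" and "self_adjoint B"
    and "a * b \<noteq> 0"
    and "r\<^sup>2 = q"
    and "ess_self_adjoint (Top A B q r a b)"
  shows "let l = of_real a * cnj r; m = of_real b * cnj r in
    l \<in> resolvent_set A \<and> l * q \<in> resolvent_set A \<and>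
    m \<in> resolvent_set B \<and> m * q \<in> resolvent_set B \<and>
    (\<forall>x. resolvent A l (resolvent B m x) =
        q *\<^sub>C resolvent B (m * q) (resolvent A (l * q) x)
        + (m * l * q * (q - 1)) *\<^sub>C
            resolvent B (m * q) (resolvent A (l * q) (resolvent A l (resolvent B m x)))) \<and>
    (\<forall>x. resolvent A l (resolvent B m x) =
        q *\<^sub>C resolvent B (m * q) (resolvent A (l * q) x)
        + (m * l * q * (q - 1)) *\<^sub>C
            resolvent A l (resolvent B m (resolvent B (m * q) (resolvent A (l * q) x)))) \<and>
    normal_op (\<lambda>x. resolvent B (of_real b * r) (resolvent A (of_real a * r) x))"
proof -
  interpret q_setting A B q r a b
    using assms(1-6) by unfold_locales
  note ess = assms(7)
  have R'_eq: "(\<lambda>x. resolvent B (of_real b * r) (resolvent A (of_real a * r) x)) = R'"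
    by (simp add: R'_def lam_q mu_q fun_eq_iff)
  have "lam \<in> resolvent_set A" "lam * q \<in> resolvent_set A"
    "mu \<in> resolvent_set B" "mu * q \<in> resolvent_set B"
    using nonreal_in_resolvent_set[OF sa_A] nonreal_in_resolvent_set[OF sa_B] nonreal_parameters
    by blast+
  then show ?thesis
    using first_resolvent_identity[OF ess] second_resolvent_identity[OF ess] normal_R'[OF ess]
    unfolding Let_def lam_def[symmetric] mu_def[symmetric] c_def[symmetric] R'_eq R_def R'_def
    by blast
qed

end
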